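(* Let $n\ge 3$ and let $C\in\mathbb{R}^{n\times n}$ be nonnegative, doubly stochastic, irreducible, with zero diagonal entries. Let $x(s)$ evolve by the Modified DeGroot-Friedkin model $x(s+1)=C^\top x(s)+X(s)x(s)-C^\top X(s)x(s)$, $X(s)=\mathrm{diag}(x(s))$, with $x(0)\in\Delta$. Let $x(s)_{\max}=\max_i x_i(s)$. If for some $s$ we have $x(s)>0$ (all entries positive) and $x(s)\ne\tfrac1n\mathbf 1$, then $x(s+n-1)_{\max}<x(s)_{\max}$.
   Context: $\Delta=\{x\in\mathbb{R}^n: x\ge 0,\ \sum_i x_i=1\}$; $\mathbf 1$ is the all-ones vector. *)

theory Defs
  imports "HOL-Analysis.Analysis"
begin

definition std_simplex :: "(real ^ 'n) set" where
  "std_simplex = {x. (\<forall>i. x $ i \<ge> 0) \<and> (\<Sum>i\<in>UNIV. x $ i) = 1}"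

definition diag_mat :: "real ^ 'n \<Rightarrow> real ^ 'n ^ 'n" where
  "diag_mat v = (\<chi> i j. if i = j then v $ i else 0)"

definition nonneg_mat :: "real ^ 'n ^ 'n \<Rightarrow> bool" where
  "nonneg_mat C \<longleftrightarrow> (\<forall>i j. C $ i $ j \<ge> 0)"

definition doubly_stochastic :: "real ^ 'n ^ 'n \<Rightarrow> bool" where
  "doubly_stochastic C \<longleftrightarrow> nonneg_mat C \<and>
     (\<forall>i. (\<Sum>j\<in>UNIV. C $ i $ j) = 1) \<and> (\<forall>j. (\<Sum>i\<in>UNIV. C $ i $ j) = 1)"

text \<open>Irreducible: there is no simultaneous row/column permutation bringing C to
  block triangular form, i.e. no nonempty proper index set S with C i j = 0 for
  all i in S and j outside S.\<close>
definition irreducible_mat :: "real ^ 'n ^ 'n \<Rightarrow> bool" where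
  "irreducible_mat C \<longleftrightarrow>
     \<not> (\<exists>S. S \<noteq> {} \<and> S \<noteq> UNIV \<and> (\<forall>i\<in>S. \<forall>j. j \<notin> S \<longrightarrow> C $ i $ j = 0))"

definition mdf_step :: "real ^ 'n ^ 'n \<Rightarrow> real ^ 'n \<Rightarrow> real ^ 'n" where
  "mdf_step C x = transpose C *v x + diag_mat x *v x - (transpose C ** diag_mat x) *v x"

definition vmax :: "real ^ 'n \<Rightarrow> real" where
  "vmax x = Max (range (\<lambda>i. x $ i))"

end

theory Submission
  imports Defs
begin

text \<open>Componentwise, the step is \<open>x\<^sub>i' = x\<^sub>i\<^sup>2 + \<Sum>\<^sub>j C\<^sub>j\<^sub>i x\<^sub>j (1 - x\<^sub>j)\<close>. On the simplex,
  \<open>t (1 - t) \<le> M (1 - M)\<close> for every entry \<open>t\<close> with \<open>M\<close> the largest entry, so by column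
  stochasticity no entry can exceed \<open>M\<close>; and for a positive vector with \<open>n \<ge> 3\<close> an entry
  attains \<open>M\<close> after the step only if it and all its in-neighbours in \<open>C\<close> attained \<open>M\<close>
  before. Hence while the maximum stays put, the set of maximising indices strictly
  shrinks, since irreducibility forbids it from being closed under in-neighbours. A vector
  off the barycentre has at most \<open>n - 1\<close> maximising indices, so the maximum must drop
  within \<open>n - 1\<close> steps.\<close>

lemma mdf_step_nth:
  "mdf_step C y $ i = (y $ i)^2 + (\<Sum>j\<in>UNIV. C $ j $ i * (y $ j * (1 - y $ j)))"
  by (simp add: mdf_step_def diag_mat_def matrix_vector_mult_def matrix_matrix_mult_def
      transpose_def if_distrib[where f = "\<lambda>u. u * _"] if_distrib[where f = "\<lambda>u. _ * u"]
      sum_subtractf sum_distrib_left power2_eq_square algebra_simps cong: if_cong)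

lemma doubly_stochastic_nonneg: "doubly_stochastic C \<Longrightarrow> 0 \<le> C $ i $ j"
  by (simp add: doubly_stochastic_def nonneg_mat_def)

lemma doubly_stochastic_row_sum: "doubly_stochastic C \<Longrightarrow> (\<Sum>j\<in>UNIV. C $ i $ j) = 1"
  by (simp add: doubly_stochastic_def)

lemma doubly_stochastic_col_sum: "doubly_stochastic C \<Longrightarrow> (\<Sum>i\<in>UNIV. C $ i $ j) = 1"
  by (simp add: doubly_stochastic_def)

lemma std_simplex_nonneg: "y \<in> std_simplex \<Longrightarrow> 0 \<le> y $ i"
  by (simp add: std_simplex_def)

lemma std_simplex_sum: "y \<in> std_simplex \<Longrightarrow> (\<Sum>i\<in>UNIV. y $ i) = 1"
  by (simp add: std_simplex_def)

lemma std_simplex_sum_le_1: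
  assumes "y \<in> std_simplex"
  shows "(\<Sum>i\<in>A. y $ i) \<le> 1"
proof -
  have "(\<Sum>i\<in>A. y $ i) \<le> (\<Sum>i\<in>UNIV. y $ i)"
    by (rule sum_mono2) (auto simp: std_simplex_nonneg[OF assms])
  then show ?thesis
    using std_simplex_sum[OF assms] by simp
qed

lemma std_simplex_le_1: "y \<in> std_simplex \<Longrightarrow> y $ i \<le> 1"
  using std_simplex_sum_le_1[of y "{i}"] by simp

lemma vmax_ge: "y $ i \<le> vmax y"
  unfolding vmax_def by (rule Max_ge) auto

lemma vmax_attained:
  obtains i where "y $ i = vmax y"
proof -
  have "vmax y \<in> range (\<lambda>i. y $ i)"
    unfolding vmax_def by (rule Max_in) auto
  then show ?thesis
    using that by auto
qed

definition vargmax :: "real ^ 'n \<Rightarrow> 'n set" where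
  "vargmax y = {i. y $ i = vmax y}"

lemma vargmax_nonempty: "vargmax y \<noteq> {}"
  unfolding vargmax_def by (auto intro: vmax_attained)

lemma card_vargmax_less:
  fixes y :: "real ^ 'n"
  shows "vargmax y \<noteq> UNIV \<Longrightarrow> card (vargmax y) < CARD('n)"
  by (intro psubset_card_mono) auto

lemma vargmax_eq_UNIV_imp_barycentre:
  fixes y :: "real ^ 'n"
  assumes "y \<in> std_simplex" and "vargmax y = UNIV"
  shows "y = (\<chi> i. 1 / real CARD('n))"
proof -
  have const: "y $ i = vmax y" for i
    using assms(2) unfolding vargmax_def by auto
  then have "real CARD('n) * vmax y = 1"
    using std_simplex_sum[OF assms(1)] by simp
  then show ?thesis
    using const by (simp add: vec_eq_iff field_simps)
qed

text \<open>On the simplex only the largest entry \<open>M\<close> can exceed \<open>1 - M\<close>, and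
  \<open>t (1 - t)\<close> is maximal on \<open>[0, 1 - M]\<close> at its right end.\<close>
lemma std_simplex_mult_compl_le_vmax:
  assumes "y \<in> std_simplex"
  shows "y $ j * (1 - y $ j) \<le> vmax y * (1 - vmax y)"
proof (cases "y $ j \<le> 1 - vmax y")
  case True
  then have "0 \<le> (vmax y - y $ j) * (1 - vmax y - y $ j)"
    using vmax_ge[of y j] by simp
  then show ?thesis
    by (simp add: algebra_simps)
next
  case False
  obtain k where k: "y $ k = vmax y"
    by (rule vmax_attained)
  have "j = k"
  proof (rule ccontr)
    assume "j \<noteq> k"
    then have "y $ j + y $ k \<le> 1"
      using std_simplex_sum_le_1[OF assms, of "{j, k}"] by simp
    then show False
      using False k by simp
  qed
  then show ?thesis
    using k by simp
qed

lemma std_simplex_mult_compl_eq_vmax: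
  fixes y :: "real ^ 'n"
  assumes "CARD('n) \<ge> 3" and "y \<in> std_simplex" and pos: "\<forall>i. 0 < y $ i"
    and eq: "y $ j * (1 - y $ j) = vmax y * (1 - vmax y)"
  shows "y $ j = vmax y"
proof (rule ccontr)
  assume ne: "y $ j \<noteq> vmax y"
  have "(vmax y - y $ j) * (1 - vmax y - y $ j) = 0"
    using eq by (simp add: algebra_simps)
  with ne have compl: "y $ j = 1 - vmax y"
    by simp
  obtain k where k: "y $ k = vmax y"
    by (rule vmax_attained)
  with ne have "j \<noteq> k"
    by auto
  have "\<not> UNIV \<subseteq> {j, k}"
  proof
    assume "UNIV \<subseteq> {j, k}"
    then have "CARD('n) \<le> card {j, k}"
      by (intro card_mono) auto
    also have "\<dots> \<le> 2"
      by (rule card_insert_le_m1) auto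
    finally show False
      using assms(1) by simp
  qed
  then obtain l where "l \<noteq> j" "l \<noteq> k"
    by blast
  with \<open>j \<noteq> k\<close> have "y $ j + y $ k + y $ l \<le> 1"
    using std_simplex_sum_le_1[OF assms(2), of "{j, k, l}"] by simp
  then show False
    using compl k pos[rule_format, of l] by simp
qed

text \<open>Column stochasticity writes \<open>M\<close> as \<open>M\<^sup>2 + \<Sum>\<^sub>j C\<^sub>j\<^sub>i M (1 - M)\<close>.\<close>
lemma vmax_minus_mdf_step_nth:
  assumes "(\<Sum>j\<in>UNIV. C $ j $ i) = 1"
  shows "vmax y - mdf_step C y $ i = ((vmax y)^2 - (y $ i)^2)
           + (\<Sum>j\<in>UNIV. C $ j $ i * (vmax y * (1 - vmax y) - y $ j * (1 - y $ j)))"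
proof -
  have "(\<Sum>j\<in>UNIV. C $ j $ i * (vmax y * (1 - vmax y) - y $ j * (1 - y $ j)))
      = vmax y * (1 - vmax y) - (\<Sum>j\<in>UNIV. C $ j $ i * (y $ j * (1 - y $ j)))"
    using assms by (simp add: right_diff_distrib sum_subtractf sum_distrib_right[symmetric])
  then show ?thesis
    unfolding mdf_step_nth by (simp add: power2_eq_square algebra_simps)
qed

lemma std_simplex_nth_sq_le_vmax_sq:
  "y \<in> std_simplex \<Longrightarrow> (y $ i)^2 \<le> (vmax y)^2"
  using std_simplex_nonneg vmax_ge by (intro power_mono) auto

lemma mdf_step_nth_le_vmax:
  assumes ds: "doubly_stochastic C" and y: "y \<in> std_simplex"
  shows "mdf_step C y $ i \<le> vmax y"
proof -
  have "0 \<le> (\<Sum>j\<in>UNIV. C $ j $ i * (vmax y * (1 - vmax y) - y $ j * (1 - y $ j)))"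
    using std_simplex_mult_compl_le_vmax[OF y] doubly_stochastic_nonneg[OF ds]
    by (intro sum_nonneg mult_nonneg_nonneg) auto
  then show ?thesis
    using vmax_minus_mdf_step_nth[where i = i and y = y, OF doubly_stochastic_col_sum[OF ds]]
      std_simplex_nth_sq_le_vmax_sq[OF y, of i]
    by linarith
qed

lemma vmax_mdf_step_le:
  assumes "doubly_stochastic C" and "y \<in> std_simplex"
  shows "vmax (mdf_step C y) \<le> vmax y"
  by (metis vmax_attained mdf_step_nth_le_vmax[OF assms])

lemma mdf_step_nth_eq_vmax:
  fixes C :: "real ^ 'n ^ 'n"
  assumes "CARD('n) \<ge> 3" and ds: "doubly_stochastic C"
    and y: "y \<in> std_simplex" and pos: "\<forall>i. 0 < y $ i"
    and eq: "mdf_step C y $ i = vmax y"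
  shows "i \<in> vargmax y" and "0 < C $ j $ i \<Longrightarrow> j \<in> vargmax y"
proof -
  define gap where "gap j = C $ j $ i * (vmax y * (1 - vmax y) - y $ j * (1 - y $ j))" for j
  have gap_nonneg: "0 \<le> gap j" for j
    unfolding gap_def using std_simplex_mult_compl_le_vmax[OF y] doubly_stochastic_nonneg[OF ds]
    by (intro mult_nonneg_nonneg) auto
  have "0 \<le> sum gap UNIV"
    using gap_nonneg by (simp add: sum_nonneg)
  then have sq: "(y $ i)^2 = (vmax y)^2" and "sum gap UNIV = 0"
    using vmax_minus_mdf_step_nth[where i = i and y = y, OF doubly_stochastic_col_sum[OF ds]]
      std_simplex_nth_sq_le_vmax_sq[OF y, of i] eq
    unfolding gap_def by linarith+
  then have gap_zero: "gap j = 0" for j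
    using sum_nonneg_eq_0_iff[of UNIV gap] gap_nonneg by simp
  show "i \<in> vargmax y"
    using sq std_simplex_nonneg[OF y, of i] vmax_ge[of y i]
    unfolding vargmax_def by (simp add: power2_eq_iff_nonneg)
  assume "0 < C $ j $ i"
  with gap_zero[of j] have "y $ j * (1 - y $ j) = vmax y * (1 - vmax y)"
    unfolding gap_def by simp
  then show "j \<in> vargmax y"
    using std_simplex_mult_compl_eq_vmax[OF assms(1) y pos] unfolding vargmax_def by simp
qed

lemma mdf_step_std_simplex:
  assumes ds: "doubly_stochastic C" and y: "y \<in> std_simplex"
  shows "mdf_step C y \<in> std_simplex"
proof -
  have "0 \<le> mdf_step C y $ i" for i
    unfolding mdf_step_nth
    using std_simplex_nonneg[OF y] std_simplex_le_1[OF y] doubly_stochastic_nonneg[OF ds]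
    by (intro add_nonneg_nonneg sum_nonneg mult_nonneg_nonneg) auto
  moreover have "(\<Sum>i\<in>UNIV. mdf_step C y $ i) = 1"
  proof -
    have "(\<Sum>i\<in>UNIV. \<Sum>j\<in>UNIV. C $ j $ i * (y $ j * (1 - y $ j)))
        = (\<Sum>j\<in>UNIV. y $ j * (1 - y $ j))"
      by (subst sum.swap) (simp add: sum_distrib_right[symmetric] doubly_stochastic_row_sum[OF ds])
    then show ?thesis
      unfolding mdf_step_nth using std_simplex_sum[OF y]
      by (simp add: sum.distrib sum_subtractf power2_eq_square algebra_simps)
  qed
  ultimately show ?thesis
    unfolding std_simplex_def by simp
qed

lemma mdf_step_pos:
  assumes ds: "doubly_stochastic C" and y: "y \<in> std_simplex" and pos: "0 < y $ i"
  shows "0 < mdf_step C y $ i"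
proof -
  have "0 \<le> (\<Sum>j\<in>UNIV. C $ j $ i * (y $ j * (1 - y $ j)))"
    using std_simplex_nonneg[OF y] std_simplex_le_1[OF y] doubly_stochastic_nonneg[OF ds]
    by (intro sum_nonneg mult_nonneg_nonneg) auto
  then show ?thesis
    unfolding mdf_step_nth using pos by (simp add: add_pos_nonneg)
qed

lemma irreducible_mat_entry_into:
  assumes "irreducible_mat C" and "S \<noteq> {}" and "S \<noteq> UNIV"
  obtains a b where "a \<notin> S" and "b \<in> S" and "C $ a $ b \<noteq> 0"
proof -
  have "- S \<noteq> {}" and "- S \<noteq> UNIV"
    using assms(2,3) by auto
  then have "\<not> (\<forall>i\<in>- S. \<forall>j. j \<notin> - S \<longrightarrow> C $ i $ j = 0)"
    using assms(1) unfolding irreducible_mat_def by (metis (no_types, lifting))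
  then show ?thesis
    using that by auto
qed

lemma vargmax_mdf_step_psubset:
  fixes C :: "real ^ 'n ^ 'n"
  assumes "CARD('n) \<ge> 3" and ds: "doubly_stochastic C" and irr: "irreducible_mat C"
    and y: "y \<in> std_simplex" and pos: "\<forall>i. 0 < y $ i"
    and vmax_eq: "vmax (mdf_step C y) = vmax y" and proper: "vargmax y \<noteq> UNIV"
  shows "vargmax (mdf_step C y) \<subset> vargmax y"
proof -
  have into: "i \<in> vargmax y" "0 < C $ j $ i \<Longrightarrow> j \<in> vargmax y"
    if "i \<in> vargmax (mdf_step C y)" for i j
    using that mdf_step_nth_eq_vmax[OF assms(1) ds y pos] vmax_eq
    unfolding vargmax_def by auto
  moreover have "vargmax (mdf_step C y) \<noteq> vargmax y"
  proof
    assume same: "vargmax (mdf_step C y) = vargmax y"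
    obtain a b where "a \<notin> vargmax y" "b \<in> vargmax y" "C $ a $ b \<noteq> 0"
      using irreducible_mat_entry_into[OF irr vargmax_nonempty proper] .
    with same into(2)[of b a] show False
      using doubly_stochastic_nonneg[OF ds, of a b] by simp
  qed
  ultimately show ?thesis
    by blast
qed

lemma funpow_mdf_step_std_simplex:
  assumes "doubly_stochastic C" and "y \<in> std_simplex"
  shows "(mdf_step C ^^ t) y \<in> std_simplex"
  by (induction t) (simp_all add: assms mdf_step_std_simplex)

lemma funpow_mdf_step_pos:
  assumes "doubly_stochastic C" and "y \<in> std_simplex" and "\<forall>i. 0 < y $ i"
  shows "0 < (mdf_step C ^^ t) y $ i"
  using assms
  by (induction t arbitrary: i) (simp_all add: mdf_step_pos funpow_mdf_step_std_simplex)

lemma vmax_funpow_mdf_step_le: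
  assumes "doubly_stochastic C" and "y \<in> std_simplex"
  shows "vmax ((mdf_step C ^^ t) y) \<le> vmax y"
proof (induction t)
  case (Suc t)
  then show ?case
    using vmax_mdf_step_le[OF assms(1) funpow_mdf_step_std_simplex[OF assms, of t]] by simp
qed simp

lemma card_vargmax_funpow_mdf_step:
  fixes C :: "real ^ 'n ^ 'n"
  assumes "CARD('n) \<ge> 3" and ds: "doubly_stochastic C" and irr: "irreducible_mat C"
    and y: "y \<in> std_simplex" and pos: "\<forall>i. 0 < y $ i" and proper: "vargmax y \<noteq> UNIV"
  shows "vmax ((mdf_step C ^^ t) y) = vmax y
           \<Longrightarrow> card (vargmax ((mdf_step C ^^ t) y)) + t \<le> card (vargmax y)"
proof (induction t)
  case (Suc t)
  let ?z = "(mdf_step C ^^ t) y"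
  have z: "?z \<in> std_simplex" "\<forall>i. 0 < ?z $ i"
    using funpow_mdf_step_std_simplex[OF ds y] funpow_mdf_step_pos[OF ds y pos] by auto
  have "vmax y \<le> vmax ?z"
    using Suc.prems vmax_mdf_step_le[OF ds z(1)] by simp
  then have vmax_z: "vmax ?z = vmax y"
    using vmax_funpow_mdf_step_le[OF ds y] by (simp add: order_antisym)
  with Suc.IH have card_z: "card (vargmax ?z) + t \<le> card (vargmax y)" .
  then have "vargmax ?z \<noteq> UNIV"
    using card_vargmax_less[OF proper] by auto
  then have "vargmax (mdf_step C ?z) \<subset> vargmax ?z"
    using Suc.prems vmax_z by (intro vargmax_mdf_step_psubset[OF assms(1) ds irr z]) simp_all
  then have "card (vargmax (mdf_step C ?z)) < card (vargmax ?z)"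
    by (simp add: psubset_card_mono)
  with card_z show ?case
    by simp
qed simp

lemma vmax_funpow_mdf_step_less:
  fixes C :: "real ^ 'n ^ 'n"
  assumes "CARD('n) \<ge> 3" and ds: "doubly_stochastic C" and irr: "irreducible_mat C"
    and y: "y \<in> std_simplex" and pos: "\<forall>i. 0 < y $ i"
    and not_bary: "y \<noteq> (\<chi> i. 1 / real CARD('n))"
  shows "vmax ((mdf_step C ^^ (CARD('n) - 1)) y) < vmax y"
proof (rule ccontr)
  let ?z = "(mdf_step C ^^ (CARD('n) - 1)) y"
  assume "\<not> ?thesis"
  then have "vmax ?z = vmax y"
    using vmax_funpow_mdf_step_le[OF ds y, of "CARD('n) - 1"] by linarith
  moreover have proper: "vargmax y \<noteq> UNIV"
    using vargmax_eq_UNIV_imp_barycentre[OF y] not_bary by blast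
  ultimately have "card (vargmax ?z) + (CARD('n) - 1) \<le> card (vargmax y)"
    using card_vargmax_funpow_mdf_step[OF assms(1-5)] by blast
  moreover note card_vargmax_less[OF proper]
  ultimately have "card (vargmax ?z) = 0"
    by linarith
  then show False
    using vargmax_nonempty[of ?z] by simp
qed

theorem lemma5:
  fixes C :: "real ^ 'n ^ 'n" and x :: "nat \<Rightarrow> real ^ 'n" and s :: nat
  assumes "CARD('n) \<ge> 3"
    and "nonneg_mat C" and "doubly_stochastic C" and "irreducible_mat C"
    and "\<forall>i. C $ i $ i = 0"
    and "\<forall>t. x (Suc t) = mdf_step C (x t)"
    and "x 0 \<in> std_simplex"
    and "\<forall>i. x s $ i > 0"
    and "x s \<noteq> (\<chi> i. 1 / real CARD('n))"
  shows "vmax (x (s + CARD('n) - 1)) < vmax (x s)"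
proof -
  have "x t \<in> std_simplex" for t
    by (induction t) (simp_all add: assms(3,6,7) mdf_step_std_simplex)
  moreover have "x (s + t) = (mdf_step C ^^ t) (x s)" for t
    by (induction t) (simp_all add: assms(6))
  ultimately show ?thesis
    using vmax_funpow_mdf_step_less[OF assms(1,3,4) _ assms(8,9)] assms(1)
    by (metis Nat.add_diff_assoc le_trans one_le_numeral)
qed

end
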